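(* Let $D$ be an oriented graph whose missing graph is a vertex-disjoint union of paths, and let $ab$, $xy$, $zt$ be missing edges of $D$. If $ab$ loses to $xy$ and $ab$ loses to $zt$, then $\{x,y\}\cap\{z,t\}\neq\emptyset$.
   Context: All digraphs are finite oriented graphs. $N^+(v)$ is the out-neighborhood; $N^{++}(v)$ is the set of vertices $w\notin N^+(v)\cup\{v\}$ with $u\to w$ for some $u\in N^+(v)$. A missing edge is a pair of distinct non-adjacent vertices; the missing graph is formed by the missing edges. For missing edges $\{x,y\},\{a,b\}$, $\{x,y\}$ loses to $\{a,b\}$ if the endpoints can be labelled so that $x\to a$, $b\notin N^+(x)\cup N^{++}(x)$, $y\to b$, $a\notin N^+(y)\cup N^{++}(y)$. *)

theory Defs
  imports Main
begin

definition oriented :: "'a set \<Rightarrow> ('a \<Rightarrow> 'a \<Rightarrow> bool) \<Rightarrow> bool" where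
  "oriented V A \<longleftrightarrow> finite V \<and>
     (\<forall>u v. A u v \<longrightarrow> u \<in> V \<and> v \<in> V \<and> u \<noteq> v \<and> \<not> A v u)"

definition out_nbhd :: "'a set \<Rightarrow> ('a \<Rightarrow> 'a \<Rightarrow> bool) \<Rightarrow> 'a \<Rightarrow> 'a set" where
  "out_nbhd V A v = {w \<in> V. A v w}"

definition second_out_nbhd :: "'a set \<Rightarrow> ('a \<Rightarrow> 'a \<Rightarrow> bool) \<Rightarrow> 'a \<Rightarrow> 'a set" where
  "second_out_nbhd V A v =
     {w \<in> V. w \<notin> out_nbhd V A v \<and> w \<noteq> v \<and> (\<exists>u \<in> out_nbhd V A v. A u w)}"

definition missing :: "'a set \<Rightarrow> ('a \<Rightarrow> 'a \<Rightarrow> bool) \<Rightarrow> 'a \<Rightarrow> 'a \<Rightarrow> bool" where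
  "missing V A u v \<longleftrightarrow> u \<in> V \<and> v \<in> V \<and> u \<noteq> v \<and> \<not> A u v \<and> \<not> A v u"

text \<open>A simple graph (V, E) is a vertex-disjoint union of paths: V is partitioned into
  the vertex sets of a family of paths (lists of distinct vertices; isolated vertices are
  one-vertex paths), and the edges are exactly the consecutive pairs of these paths.\<close>
definition union_of_paths :: "'a set \<Rightarrow> ('a \<Rightarrow> 'a \<Rightarrow> bool) \<Rightarrow> bool" where
  "union_of_paths V E \<longleftrightarrow> (\<exists>P :: 'a list set.
     (\<forall>p \<in> P. p \<noteq> [] \<and> distinct p) \<and>
     (\<forall>p \<in> P. \<forall>q \<in> P. p \<noteq> q \<longrightarrow> set p \<inter> set q = {}) \<and>
     (\<Union>p \<in> P. set p) = V \<and>
     (\<forall>u v. E u v \<longleftrightarrow>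
        (\<exists>p \<in> P. \<exists>i. Suc i < length p \<and> {p ! i, p ! Suc i} = {u, v})))"

text \<open>The missing edge {x,y} loses to the missing edge {a,b}.\<close>
definition loses_to :: "'a set \<Rightarrow> ('a \<Rightarrow> 'a \<Rightarrow> bool) \<Rightarrow> 'a \<Rightarrow> 'a \<Rightarrow> 'a \<Rightarrow> 'a \<Rightarrow> bool" where
  "loses_to V A x y a b \<longleftrightarrow> (\<exists>x' y' a' b'. {x', y'} = {x, y} \<and> {a', b'} = {a, b} \<and>
     A x' a' \<and> b' \<notin> out_nbhd V A x' \<union> second_out_nbhd V A x' \<and>
     A y' b' \<and> a' \<notin> out_nbhd V A y' \<union> second_out_nbhd V A y')"

end

theory Submission
  imports Defs
begin

text \<open>
  Suppose the two missing edges were disjoint. Labelling the losing edge as \<open>pq\<close>, both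
  defeats can be oriented so that \<open>p \<rightarrow> u, q \<rightarrow> v\<close> and \<open>p \<rightarrow> u', q \<rightarrow> v'\<close> with the
  targets of \<open>p\<close> out of reach of \<open>q\<close> within two steps and vice versa. Whenever \<open>r \<rightarrow> w\<close>
  and \<open>s \<rightarrow> w'\<close> with \<open>w'\<close> out of reach of \<open>r\<close> and \<open>w\<close> out of reach of \<open>s\<close>, an arc
  between \<open>w\<close> and \<open>w'\<close> would put one of them in the second out-neighbourhood of \<open>r\<close> or
  \<open>s\<close>; so \<open>w w'\<close> is a missing edge. This makes \<open>u v u' v'\<close> a 4-cycle in the missing
  graph, which a disjoint union of paths cannot contain.
\<close>

definition path_partition :: "'a set \<Rightarrow> ('a \<Rightarrow> 'a \<Rightarrow> bool) \<Rightarrow> 'a list set \<Rightarrow> bool" where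
  "path_partition V E P \<longleftrightarrow>
     (\<forall>p \<in> P. p \<noteq> [] \<and> distinct p) \<and>
     (\<forall>p \<in> P. \<forall>q \<in> P. p \<noteq> q \<longrightarrow> set p \<inter> set q = {}) \<and>
     (\<Union>p \<in> P. set p) = V \<and>
     (\<forall>u v. E u v \<longleftrightarrow>
        (\<exists>p \<in> P. \<exists>i. Suc i < length p \<and> {p ! i, p ! Suc i} = {u, v}))"

lemma union_of_paths_iff_path_partition:
  "union_of_paths V E \<longleftrightarrow> (\<exists>P. path_partition V E P)"
  unfolding union_of_paths_def path_partition_def ..

lemma distinct_nth_doubleton_consecutive:
  assumes "distinct p" "Suc i < length p" "j < length p" "k < length p"
    and "{p ! i, p ! Suc i} = {p ! j, p ! k}"
  shows "j = Suc k \<or> k = Suc j"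
proof -
  have "(p ! i = p ! j \<and> p ! Suc i = p ! k) \<or> (p ! i = p ! k \<and> p ! Suc i = p ! j)"
    using assms(5) by (auto simp: doubleton_eq_iff)
  then show ?thesis
  proof
    assume "p ! i = p ! j \<and> p ! Suc i = p ! k"
    then have "j = i" "k = Suc i"
      using assms(1-4) nth_eq_iff_index_eq[of p] by auto
    then show ?thesis by simp
  next
    assume "p ! i = p ! k \<and> p ! Suc i = p ! j"
    then have "k = i" "j = Suc i"
      using assms(1-4) nth_eq_iff_index_eq[of p] by auto
    then show ?thesis by simp
  qed
qed

lemma path_partition_edgeE:
  assumes "path_partition V E P" "E u v"
  obtains p i where "p \<in> P" "Suc i < length p" "{p ! i, p ! Suc i} = {u, v}"
  using assms unfolding path_partition_def by blast

lemma path_partition_edge_in_path: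
  assumes "path_partition V E P" "E u v" "p \<in> P" "u \<in> set p"
  shows "v \<in> set p"
proof -
  obtain q i where q: "q \<in> P" "Suc i < length q" "{q ! i, q ! Suc i} = {u, v}"
    using path_partition_edgeE[OF assms(1,2)] .
  have "u \<in> set q" "v \<in> set q"
    using q(2,3) nth_mem[of i q] nth_mem[of "Suc i" q] by (auto simp: doubleton_eq_iff)
  moreover have "set p \<inter> set q = {} \<or> p = q"
    using assms(1,3) q(1) unfolding path_partition_def by blast
  ultimately show ?thesis using assms(4) by blast
qed

lemma path_partition_edge_consecutive:
  assumes "path_partition V E P" "E (p ! j) (p ! k)" "p \<in> P"
    and "j < length p" "k < length p"
  shows "j = Suc k \<or> k = Suc j"
proof -
  obtain q i where q: "q \<in> P" "Suc i < length q" "{q ! i, q ! Suc i} = {p ! j, p ! k}"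
    using path_partition_edgeE[OF assms(1,2)] .
  have "q ! i \<in> set q" "q ! i \<in> set p"
    using q(2,3) assms(4,5) by (auto simp: doubleton_eq_iff)
  then have "q = p"
    using assms(1,3) q(1) unfolding path_partition_def by blast
  moreover have "distinct p"
    using assms(1,3) unfolding path_partition_def by blast
  ultimately show ?thesis
    using distinct_nth_doubleton_consecutive[of p i j k] assms(4,5) q(2,3) by simp
qed

text \<open>Positions along the common path change by one at each step, so after four steps the
  walk cannot return without revisiting a position two steps back.\<close>

lemma union_of_paths_no_4_cycle:
  assumes "union_of_paths V E"
    and "E c1 c2" "E c2 c3" "E c3 c4" "E c4 c1" "c1 \<noteq> c3" "c2 \<noteq> c4"
  shows False
proof -
  obtain P where P: "path_partition V E P"
    using assms(1) union_of_paths_iff_path_partition by blast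
  obtain p i where p: "p \<in> P" "Suc i < length p" "{p ! i, p ! Suc i} = {c1, c2}"
    using path_partition_edgeE[OF P assms(2)] .
  have "c1 \<in> set p"
    using p(2,3) nth_mem[of i p] nth_mem[of "Suc i" p] by (auto simp: doubleton_eq_iff)
  then have "c2 \<in> set p" "c3 \<in> set p" "c4 \<in> set p"
    using path_partition_edge_in_path[OF P _ p(1)] assms(2-4) by blast+
  with \<open>c1 \<in> set p\<close> obtain j1 j2 j3 j4
    where j: "j1 < length p" "j2 < length p" "j3 < length p" "j4 < length p"
      and c: "c1 = p ! j1" "c2 = p ! j2" "c3 = p ! j3" "c4 = p ! j4"
    unfolding in_set_conv_nth by blast
  have "j1 = Suc j2 \<or> j2 = Suc j1" "j2 = Suc j3 \<or> j3 = Suc j2"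
    "j3 = Suc j4 \<or> j4 = Suc j3" "j4 = Suc j1 \<or> j1 = Suc j4"
    using path_partition_edge_consecutive[OF P _ p(1)] assms(2-5) j unfolding c by blast+
  moreover have "j1 \<noteq> j3" "j2 \<noteq> j4"
    using assms(6,7) c by auto
  ultimately show False by arith
qed

lemma no_arc_to_far_vertex:
  assumes "oriented V A" "A r w" "w' \<notin> out_nbhd V A r \<union> second_out_nbhd V A r"
  shows "\<not> A w w'"
proof
  assume "A w w'"
  moreover have "w \<in> out_nbhd V A r" "w' \<in> V" "w' \<noteq> r"
    using assms(1,2) \<open>A w w'\<close> unfolding oriented_def out_nbhd_def by blast+
  ultimately show False
    using assms(3) unfolding second_out_nbhd_def by blast
qed

lemma far_targets_missing:
  assumes "oriented V A" "A r w" "A s w'" "w \<noteq> w'"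
    and "w' \<notin> out_nbhd V A r \<union> second_out_nbhd V A r"
    and "w \<notin> out_nbhd V A s \<union> second_out_nbhd V A s"
  shows "missing V A w w'"
  using no_arc_to_far_vertex[OF assms(1,2,5)] no_arc_to_far_vertex[OF assms(1,3,6)]
    assms(1-4) unfolding missing_def oriented_def by blast

lemma loses_toE:
  assumes "loses_to V A a b x y" "a \<noteq> b"
  obtains u v where "{u, v} = {x, y}"
    "A a u" "v \<notin> out_nbhd V A a \<union> second_out_nbhd V A a"
    "A b v" "u \<notin> out_nbhd V A b \<union> second_out_nbhd V A b"
proof -
  obtain a' b' u v where L: "{u, v} = {x, y}" "{a', b'} = {a, b}"
    "A a' u" "v \<notin> out_nbhd V A a' \<union> second_out_nbhd V A a'"
    "A b' v" "u \<notin> out_nbhd V A b' \<union> second_out_nbhd V A b'"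
    using assms(1) unfolding loses_to_def by blast
  have "(a' = a \<and> b' = b) \<or> (a' = b \<and> b' = a)"
    using L(2) by (auto simp: doubleton_eq_iff)
  then show thesis
  proof
    assume "a' = a \<and> b' = b"
    then show thesis using that L by blast
  next
    assume "a' = b \<and> b' = a"
    then show thesis using that[of v u] L by (simp add: insert_commute)
  qed
qed

theorem lemma4p1:
  fixes V :: "'a set" and A :: "'a \<Rightarrow> 'a \<Rightarrow> bool" and a b x y z t :: 'a
  assumes "oriented V A"
    and "union_of_paths V (missing V A)"
    and "missing V A a b" and "missing V A x y" and "missing V A z t"
    and "loses_to V A a b x y" and "loses_to V A a b z t"
  shows "{x, y} \<inter> {z, t} \<noteq> {}"
proof
  assume disjoint: "{x, y} \<inter> {z, t} = {}"
  have "a \<noteq> b" using assms(3) unfolding missing_def by blast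
  obtain u v where uv: "{u, v} = {x, y}"
    "A a u" "v \<notin> out_nbhd V A a \<union> second_out_nbhd V A a"
    "A b v" "u \<notin> out_nbhd V A b \<union> second_out_nbhd V A b"
    using loses_toE[OF assms(6) \<open>a \<noteq> b\<close>] .
  obtain u' v' where uv': "{u', v'} = {z, t}"
    "A a u'" "v' \<notin> out_nbhd V A a \<union> second_out_nbhd V A a"
    "A b v'" "u' \<notin> out_nbhd V A b \<union> second_out_nbhd V A b"
    using loses_toE[OF assms(7) \<open>a \<noteq> b\<close>] .
  have "u \<noteq> v" "u' \<noteq> v'"
    using assms(4,5) uv(1) uv'(1) unfolding missing_def by (auto simp: doubleton_eq_iff)
  moreover have "u \<noteq> u'" "v \<noteq> v'" "v \<noteq> u'" "v' \<noteq> u"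
    using disjoint uv(1) uv'(1) by blast+
  ultimately have "missing V A u v" "missing V A v u'" "missing V A u' v'" "missing V A v' u"
    using far_targets_missing[OF assms(1) uv(2) uv(4)] far_targets_missing[OF assms(1) uv(4) uv'(2)]
      far_targets_missing[OF assms(1) uv'(2) uv'(4)] far_targets_missing[OF assms(1) uv'(4) uv(2)]
      uv uv' by auto
  then show False
    using union_of_paths_no_4_cycle[OF assms(2)] \<open>u \<noteq> u'\<close> \<open>v \<noteq> v'\<close> by blast
qed

end
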